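(* Let $m,n$ be positive integers with $m\ge n$. Then there exists a private information distinguishing debate game $B=(A,S,P,C_w,C_l)$ such that $|C_w(s)|\ge m$ and $|C_l(s)|\le n$ for all $s\in S$, but $e^{\mathrm{PIDDG}}_B(M)\ge\frac{n}{2m}$ for every policy $M$.
   Context: Let $\delta$ be a special default action. A PIDDG is a tuple $(A,S,P,C_w,C_l)$ with $A$ finite, $\delta\notin A$, $S$ finite, $P$ a probability mass function on $S$, and $C_w,C_l:S\to\mathcal P(A)$. A policy is $M:\{1,2\}\times(A\cup\{\delta\})^2\to[0,1]$ with $M(1,a_1,a_2)+M(2,a_1,a_2)=1$. $G_1(B,M)$ is the following Bayesian game with agents $1,2$. Each agent has action set $A\cup\{\delta\}$ and type set $\mathcal P(A)$. A scenario $s\sim P$ is drawn, and agent 1 gets type $C_w(s)$ while agent 2 gets type $C_l(s)$. Payoffs are as follows: - if both agents play available actions ($a_i\in t_i\cup\{\delta\}$), agent $i$ gets $M(i,a_1,a_2)$; - if exactly one plays an unavailable action, it gets $0$ and the other gets $1$; - if both play unavailable actions, each gets $1/2$. $G_2(B,M)$ is the same with types swapped. The error is $e^{\mathrm{PIDDG}}_B(M)=\frac{v_1(G_2(B,M))+v_2(G_1(B,M))}{2}$, where $v_i$ is the value of the zero-sum Bayesian game to agent $i$. *)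

theory Defs
  imports Main "HOL-Library.Extended_Real" Complex_Main
begin

text \<open>Actions are of type nat option: None is the default action delta, Some x is x in A.
  Agents are indexed by the naturals 1 and 2.\<close>

definition acts :: "nat set \<Rightarrow> nat option set" where
  "acts A = insert None (Some ` A)"

definition avail :: "nat set \<Rightarrow> nat option \<Rightarrow> bool" where
  "avail t a = (case a of None \<Rightarrow> True | Some x \<Rightarrow> x \<in> t)"

definition payoff :: "(nat \<Rightarrow> nat option \<Rightarrow> nat option \<Rightarrow> real) \<Rightarrow> nat \<Rightarrow>
    nat set \<Rightarrow> nat set \<Rightarrow> nat option \<Rightarrow> nat option \<Rightarrow> real" where
  "payoff M i t1 t2 a1 a2 =
     (if avail t1 a1 \<and> avail t2 a2 then M i a1 a2
      else if avail t1 a1 then (if i = 1 then 1 else 0)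
      else if avail t2 a2 then (if i = 1 then 0 else 1)
      else 1/2)"

definition is_strategy :: "nat set \<Rightarrow> (nat set \<Rightarrow> nat option \<Rightarrow> real) \<Rightarrow> bool" where
  "is_strategy A \<sigma> \<longleftrightarrow> (\<forall>t a. 0 \<le> \<sigma> t a) \<and> (\<forall>t a. a \<notin> acts A \<longrightarrow> \<sigma> t a = 0)
     \<and> (\<forall>t. sum (\<sigma> t) (acts A) = 1)"

definition exp_payoff :: "nat set \<Rightarrow> nat set \<Rightarrow> (nat \<Rightarrow> real) \<Rightarrow> (nat \<Rightarrow> nat set) \<Rightarrow>
    (nat \<Rightarrow> nat set) \<Rightarrow> (nat \<Rightarrow> nat option \<Rightarrow> nat option \<Rightarrow> real) \<Rightarrow> nat \<Rightarrow>
    (nat set \<Rightarrow> nat option \<Rightarrow> real) \<Rightarrow> (nat set \<Rightarrow> nat option \<Rightarrow> real) \<Rightarrow> real" where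
  "exp_payoff A S P T1 T2 M i \<sigma>1 \<sigma>2 =
     (\<Sum>s\<in>S. P s * (\<Sum>a1\<in>acts A. \<Sum>a2\<in>acts A.
        \<sigma>1 (T1 s) a1 * \<sigma>2 (T2 s) a2 * payoff M i (T1 s) (T2 s) a1 a2))"

definition val1 where
  "val1 A S P T1 T2 M =
     (SUP \<sigma>1\<in>{\<sigma>. is_strategy A \<sigma>}. INF \<sigma>2\<in>{\<sigma>. is_strategy A \<sigma>}.
        exp_payoff A S P T1 T2 M 1 \<sigma>1 \<sigma>2)"

definition val2 where
  "val2 A S P T1 T2 M =
     (SUP \<sigma>2\<in>{\<sigma>. is_strategy A \<sigma>}. INF \<sigma>1\<in>{\<sigma>. is_strategy A \<sigma>}.
        exp_payoff A S P T1 T2 M 2 \<sigma>1 \<sigma>2)"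

definition is_PIDDG :: "nat set \<Rightarrow> nat set \<Rightarrow> (nat \<Rightarrow> real) \<Rightarrow> (nat \<Rightarrow> nat set) \<Rightarrow>
    (nat \<Rightarrow> nat set) \<Rightarrow> bool" where
  "is_PIDDG A S P Cw Cl \<longleftrightarrow> finite A \<and> finite S \<and> (\<forall>s\<in>S. 0 \<le> P s) \<and> sum P S = 1
     \<and> (\<forall>s\<in>S. Cw s \<subseteq> A \<and> Cl s \<subseteq> A)"

definition is_policy :: "nat set \<Rightarrow> (nat \<Rightarrow> nat option \<Rightarrow> nat option \<Rightarrow> real) \<Rightarrow> bool" where
  "is_policy A M \<longleftrightarrow> (\<forall>a1\<in>acts A. \<forall>a2\<in>acts A.
     0 \<le> M 1 a1 a2 \<and> M 1 a1 a2 \<le> 1 \<and> 0 \<le> M 2 a1 a2 \<and> M 2 a1 a2 \<le> 1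
     \<and> M 1 a1 a2 + M 2 a1 a2 = 1)"

text \<open>G1: agent 1 has type Cw, agent 2 has type Cl; G2: types swapped.\<close>
definition piddg_error where
  "piddg_error A S P Cw Cl M = (val1 A S P Cl Cw M + val2 A S P Cw Cl M) / 2"

end

theory Submission
  imports Defs
begin

text \<open>
  In the constructed game the honest debater may play every action, while the liar of scenario
  s only has the cyclic window of n actions starting at s, so every action is available to the
  liar with probability at least n/m. Whatever role it plays, the liar can take a mixed
  strategy of the matrix game M, keep the mass on its available actions and move the rest to
  the default action; against an honest opponent this secures n/m times what the strategy
  secures in the matrix game. By the minimax theorem the two roles together secure 1 in the
  matrix game, so the two liar values add up to at least n/m. The minimax theorem is derived
  from Ville's theorem of the alternative, proved by Fourier-Motzkin elimination.
\<close>

section \<open>Ville's theorem of the alternative\<close>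

lemma finite_sets_separated:
  fixes L U :: "real set"
  assumes "finite L" "finite U" "L \<noteq> {}" "\<forall>l\<in>L. \<forall>u\<in>U. l < u"
  shows "\<exists>t. (\<forall>l\<in>L. l < t) \<and> (\<forall>u\<in>U. t < u)"
proof (cases "U = {}")
  case True
  then show ?thesis
    using assms by (intro exI[of _ "Max L + 1"]) (auto dest: Max_ge)
next
  case False
  have "Max L < Min U"
    using assms False by simp
  then show ?thesis
    using assms by (intro exI[of _ "(Max L + Min U) / 2"]) (fastforce dest: Max_ge Min_le)
qed

lemma ex_pos_coeff_neg:
  fixes a b :: "'x \<Rightarrow> real"
  assumes "finite X"
    and nonneg: "\<And>x. x \<in> X \<Longrightarrow> 0 \<le> a x \<Longrightarrow> b x < 0"
    and pairs: "\<And>i j. i \<in> X \<Longrightarrow> j \<in> X \<Longrightarrow> 0 < a i \<Longrightarrow> a j < 0 \<Longrightarrow> a i * b j - a j * b i < 0"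
  shows "\<exists>t>0. \<forall>x\<in>X. b x + t * a x < 0"
proof -
  define L where "L = insert 0 ((\<lambda>j. b j / - a j) ` {j\<in>X. a j < 0})"
  define U where "U = (\<lambda>i. - b i / a i) ` {i\<in>X. 0 < a i}"
  have "l < u" if "l \<in> L" "u \<in> U" for l u
  proof -
    obtain i where i: "i \<in> X" "0 < a i" "u = - b i / a i"
      using \<open>u \<in> U\<close> unfolding U_def by auto
    from \<open>l \<in> L\<close> consider "l = 0" | j where "j \<in> X" "a j < 0" "l = b j / - a j"
      unfolding L_def by auto
    then show "l < u"
    proof cases
      case 1
      then show ?thesis using i nonneg[of i] by (simp add: divide_neg_pos)
    next
      case 2
      have "b j * a i < - b i * - a j"
        using i 2 pairs[of i j] by (simp add: algebra_simps)
      then have "b j / - a j < - b i / a i"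
        using i 2 by (simp add: divide_less_eq less_divide_eq mult.commute)
      then show ?thesis using i 2 by simp
    qed
  qed
  moreover have "finite L" "finite U" "L \<noteq> {}"
    unfolding L_def U_def using \<open>finite X\<close> by auto
  ultimately obtain t where tL: "\<forall>l\<in>L. l < t" and tU: "\<forall>u\<in>U. t < u"
    using finite_sets_separated[of L U] by blast
  have "b x + t * a x < 0" if "x \<in> X" for x
  proof (cases "a x" "0::real" rule: linorder_cases)
    case less
    then have "b x / - a x < t" using tL that unfolding L_def by auto
    then show ?thesis using less by (simp add: divide_less_eq field_simps)
  next
    case equal
    then show ?thesis using nonneg that by auto
  next
    case greater
    then have "t < - b x / a x" using tU that unfolding U_def by auto
    then show ?thesis using greater by (simp add: less_divide_eq field_simps)
  qed
  moreover have "0 < t" using tL unfolding L_def by auto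
  ultimately show ?thesis by blast
qed

definition has_nonneg_combination :: "('c \<Rightarrow> real) set \<Rightarrow> 'c set \<Rightarrow> bool" where
  "has_nonneg_combination X C \<longleftrightarrow>
     (\<exists>w. (\<forall>x\<in>X. 0 \<le> w x) \<and> 0 < sum w X \<and> (\<forall>c\<in>C. 0 \<le> (\<Sum>x\<in>X. w x * x c)))"

definition has_separating_weights :: "('c \<Rightarrow> real) set \<Rightarrow> 'c set \<Rightarrow> bool" where
  "has_separating_weights X C \<longleftrightarrow>
     (\<exists>q. (\<forall>c\<in>C. 0 \<le> q c) \<and> (\<forall>x\<in>X. (\<Sum>c\<in>C. x c * q c) < 0))"

definition fourier_motzkin_elim :: "'c \<Rightarrow> ('c \<Rightarrow> real) set \<Rightarrow> ('c \<Rightarrow> real) set" where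
  "fourier_motzkin_elim c0 X = {x \<in> X. 0 \<le> x c0} \<union>
     (\<lambda>(i, j) c. i c0 * j c - j c0 * i c) ` {(i, j) \<in> X \<times> X. 0 < i c0 \<and> j c0 < 0}"

lemma finite_fourier_motzkin_elim: "finite X \<Longrightarrow> finite (fourier_motzkin_elim c0 X)"
  unfolding fourier_motzkin_elim_def by (auto intro: finite_subset[of _ "X \<times> X"])

lemma fourier_motzkin_elim_cone:
  assumes "finite X" "y \<in> fourier_motzkin_elim c0 X"
  shows "0 \<le> y c0 \<and> (\<exists>\<beta>. (\<forall>x\<in>X. 0 \<le> \<beta> x) \<and> 0 < sum \<beta> X \<and> (\<forall>c. y c = (\<Sum>x\<in>X. \<beta> x * x c)))"
  using assms(2) unfolding fourier_motzkin_elim_def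
proof (elim UnE CollectE imageE conjE; clarsimp)
  assume "y \<in> X" "0 \<le> y c0"
  then show "\<exists>\<beta>. (\<forall>x\<in>X. 0 \<le> \<beta> x) \<and> 0 < sum \<beta> X \<and> (\<forall>c. y c = (\<Sum>x\<in>X. \<beta> x * x c))"
    using assms(1) by (intro exI[of _ "\<lambda>x. if x = y then 1 else 0"])
      (simp add: if_distrib[of "\<lambda>u. u * _"] cong: if_cong)
next
  fix i j assume ij: "i \<in> X" "j \<in> X" "0 < i c0" "j c0 < 0"
  define \<beta> where "\<beta> x = (if x = j then i c0 else 0) + (if x = i then - j c0 else 0)" for x
  have "i \<noteq> j" using ij by auto
  have "(\<Sum>x\<in>X. \<beta> x * x c) = i c0 * j c - j c0 * i c" for c
    using ij assms(1) unfolding \<beta>_def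
    by (simp add: distrib_right sum.distrib if_distrib[of "\<lambda>u. u * _"] cong: if_cong)
  moreover have "0 < sum \<beta> X"
    using ij assms(1) unfolding \<beta>_def by (simp add: sum.distrib)
  moreover have "\<forall>x\<in>X. 0 \<le> \<beta> x"
    using ij \<open>i \<noteq> j\<close> unfolding \<beta>_def by auto
  ultimately show "\<exists>\<beta>. (\<forall>x\<in>X. 0 \<le> \<beta> x) \<and> 0 < sum \<beta> X \<and>
      (\<forall>c. i c0 * j c - j c0 * i c = (\<Sum>x\<in>X. \<beta> x * x c))"
    by metis
qed

lemma has_nonneg_combination_fourier_motzkin_elim:
  assumes "finite X" "has_nonneg_combination (fourier_motzkin_elim c0 X) C"
  shows "has_nonneg_combination X (insert c0 C)"
proof -
  let ?Y = "fourier_motzkin_elim c0 X"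
  obtain w' where w'0: "\<forall>y\<in>?Y. 0 \<le> w' y" and w'_pos: "0 < sum w' ?Y"
    and w'C: "\<forall>c\<in>C. 0 \<le> (\<Sum>y\<in>?Y. w' y * y c)"
    using assms(2) unfolding has_nonneg_combination_def by blast
  have "\<forall>y\<in>?Y. \<exists>\<beta>. 0 \<le> y c0 \<and> (\<forall>x\<in>X. 0 \<le> \<beta> x) \<and> 0 < sum \<beta> X \<and>
      (\<forall>c. y c = (\<Sum>x\<in>X. \<beta> x * x c))"
    using fourier_motzkin_elim_cone[OF assms(1)] by blast
  then obtain \<beta> where \<beta>: "\<forall>y\<in>?Y. 0 \<le> y c0 \<and> (\<forall>x\<in>X. 0 \<le> \<beta> y x) \<and> 0 < sum (\<beta> y) X \<and>
      (\<forall>c. y c = (\<Sum>x\<in>X. \<beta> y x * x c))"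
    by metis
  define w where "w x = (\<Sum>y\<in>?Y. w' y * \<beta> y x)" for x
  have comb: "(\<Sum>x\<in>X. w x * x c) = (\<Sum>y\<in>?Y. w' y * y c)" for c
  proof -
    have "(\<Sum>x\<in>X. w x * x c) = (\<Sum>y\<in>?Y. w' y * (\<Sum>x\<in>X. \<beta> y x * x c))"
      unfolding w_def by (simp add: sum_distrib_left sum_distrib_right sum.swap[of _ X] mult.assoc)
    also have "\<dots> = (\<Sum>y\<in>?Y. w' y * y c)"
      using \<beta> by (intro sum.cong) auto
    finally show ?thesis .
  qed
  obtain y0 where y0: "y0 \<in> ?Y" "0 < w' y0"
    using w'_pos by (meson not_le sum_nonpos)
  have "sum w X = (\<Sum>y\<in>?Y. w' y * sum (\<beta> y) X)"
    unfolding w_def by (simp add: sum_distrib_left sum.swap[of _ X])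
  also have "\<dots> > 0"
    using y0 w'0 \<beta> finite_fourier_motzkin_elim[OF assms(1)]
    by (intro sum_pos2[of ?Y y0]) auto
  finally have "0 < sum w X" .
  moreover have "\<forall>x\<in>X. 0 \<le> w x"
    unfolding w_def using \<beta> w'0 by (auto intro!: sum_nonneg)
  moreover have "\<forall>c\<in>insert c0 C. 0 \<le> (\<Sum>x\<in>X. w x * x c)"
    unfolding comb using w'C w'0 \<beta> by (auto intro!: sum_nonneg)
  ultimately show ?thesis
    unfolding has_nonneg_combination_def by blast
qed

lemma has_separating_weights_fourier_motzkin_elim:
  assumes "finite X" "finite C" "c0 \<notin> C" "has_separating_weights (fourier_motzkin_elim c0 X) C"
  shows "has_separating_weights X (insert c0 C)"
proof -
  obtain q where q0: "\<forall>c\<in>C. 0 \<le> q c"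
    and q_neg: "\<forall>y\<in>fourier_motzkin_elim c0 X. (\<Sum>c\<in>C. y c * q c) < 0"
    using assms(4) unfolding has_separating_weights_def by blast
  define b where "b x = (\<Sum>c\<in>C. x c * q c)" for x
  have "b x < 0" if "x \<in> X" "0 \<le> x c0" for x
    using q_neg that unfolding fourier_motzkin_elim_def b_def by auto
  moreover have "i c0 * b j - j c0 * b i < 0"
    if "i \<in> X" "j \<in> X" "0 < i c0" "j c0 < 0" for i j
  proof -
    have "(\<lambda>c. i c0 * j c - j c0 * i c) \<in> fourier_motzkin_elim c0 X"
      unfolding fourier_motzkin_elim_def using that by auto
    from q_neg[rule_format, OF this]
    have "(\<Sum>c\<in>C. (i c0 * j c - j c0 * i c) * q c) < 0" by simp
    moreover have "(\<Sum>c\<in>C. (i c0 * j c - j c0 * i c) * q c) = i c0 * b j - j c0 * b i"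
      unfolding b_def by (simp add: sum_distrib_left sum_subtractf left_diff_distrib mult.assoc)
    ultimately show ?thesis by simp
  qed
  ultimately obtain t where "0 < t" and t: "\<forall>x\<in>X. b x + t * x c0 < 0"
    using ex_pos_coeff_neg[OF assms(1), of "\<lambda>x. x c0" b] by blast
  have "(\<Sum>c\<in>C. x c * (q(c0 := t)) c) = b x" for x
    unfolding b_def using assms(3) by (intro sum.cong) auto
  then have "(\<Sum>c\<in>insert c0 C. x c * (q(c0 := t)) c) = b x + t * x c0" for x
    using assms(2,3) by (simp add: mult.commute)
  then show ?thesis
    unfolding has_separating_weights_def using q0 \<open>0 < t\<close> t assms(3)
    by (intro exI[of _ "q(c0 := t)"]) auto
qed

theorem ville_alternative:
  fixes X :: "('c \<Rightarrow> real) set"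
  assumes "finite C" "finite X"
  shows "has_nonneg_combination X C \<or> has_separating_weights X C"
  using assms
proof (induction C arbitrary: X rule: finite_induct)
  case empty
  show ?case
  proof (cases "X = {}")
    case True
    then show ?thesis by (simp add: has_separating_weights_def)
  next
    case False
    then show ?thesis
      using empty.prems unfolding has_nonneg_combination_def
      by (intro disjI1 exI[of _ "\<lambda>_. 1"]) (simp add: card_gt_0_iff)
  qed
next
  case (insert c0 C)
  from insert.IH[OF finite_fourier_motzkin_elim[OF insert.prems]] show ?case
  proof
    assume "has_nonneg_combination (fourier_motzkin_elim c0 X) C"
    then show ?thesis
      using has_nonneg_combination_fourier_motzkin_elim[OF insert.prems] by blast
  next
    assume "has_separating_weights (fourier_motzkin_elim c0 X) C"
    then show ?thesis
      using has_separating_weights_fourier_motzkin_elim[OF insert.prems insert.hyps] by blast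
  qed
qed

lemma sum_over_fibers:
  assumes "finite I"
  shows "(\<Sum>i\<in>I. g (f i) / card {j\<in>I. f j = f i}) = (\<Sum>y\<in>f ` I. g y)"
proof -
  have "(\<Sum>i\<in>{j\<in>I. f j = y}. g (f i) / card {j\<in>I. f j = f i}) = g y" if "y \<in> f ` I" for y
  proof -
    have "{j\<in>I. f j = y} \<noteq> {}" using that by auto
    then have "card {j\<in>I. f j = y} \<noteq> 0" using assms by simp
    then show ?thesis by simp
  qed
  then show ?thesis
    using sum.image_gen[OF assms, of "\<lambda>i. g (f i) / card {j\<in>I. f j = f i}" f] by simp
qed

lemma matrix_game_alternative:
  fixes N :: "'a \<Rightarrow> 'b \<Rightarrow> real"
  assumes "finite H" "H \<noteq> {}" "finite K"
  shows "(\<exists>p. (\<forall>a\<in>H. 0 \<le> p a) \<and> sum p H = 1 \<and> (\<forall>b\<in>K. v \<le> (\<Sum>a\<in>H. p a * N a b)))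
       \<or> (\<exists>q. (\<forall>b\<in>K. 0 \<le> q b) \<and> sum q K = 1 \<and> (\<forall>a\<in>H. (\<Sum>b\<in>K. N a b * q b) \<le> v))"
proof -
  define row where "row a = (\<lambda>b. N a b - v)" for a
  from ville_alternative[OF assms(3) finite_imageI[OF assms(1)], of row] show ?thesis
  proof
    assume "has_nonneg_combination (row ` H) K"
    then obtain w where w0: "\<forall>y\<in>row ` H. 0 \<le> w y" and W_pos: "0 < sum w (row ` H)"
      and wK: "\<forall>b\<in>K. 0 \<le> (\<Sum>y\<in>row ` H. w y * y b)"
      unfolding has_nonneg_combination_def by blast
    define W where "W = sum w (row ` H)"
    \<comment> \<open>rows may coincide, so the weight of a row vector is shared evenly by its fibre\<close>
    define p where "p a = w (row a) / W / card {a'\<in>H. row a' = row a}" for a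
    have p_sum: "sum p H = 1"
      unfolding p_def using sum_over_fibers[OF assms(1), of "\<lambda>y. w y / W"] W_pos
      by (simp add: W_def sum_divide_distrib[symmetric])
    have "v \<le> (\<Sum>a\<in>H. p a * N a b)" if "b \<in> K" for b
    proof -
      have "(\<Sum>a\<in>H. p a * row a b) = (\<Sum>y\<in>row ` H. w y * y b) / W"
        unfolding p_def using sum_over_fibers[OF assms(1), of "\<lambda>y. w y / W * y b"]
        by (simp add: sum_divide_distrib[symmetric])
      also have "\<dots> \<ge> 0" using wK that W_pos by (simp add: W_def)
      finally have "0 \<le> (\<Sum>a\<in>H. p a * N a b) - v * sum p H"
        unfolding row_def by (simp add: right_diff_distrib sum_subtractf sum_distrib_left mult.commute)
      then show ?thesis using p_sum by simp
    qed
    moreover have "\<forall>a\<in>H. 0 \<le> p a"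
      unfolding p_def W_def using w0 W_pos by simp
    ultimately show ?thesis using p_sum by blast
  next
    assume "has_separating_weights (row ` H) K"
    then obtain q where q0: "\<forall>b\<in>K. 0 \<le> q b" and q_neg: "\<forall>a\<in>H. (\<Sum>b\<in>K. row a b * q b) < 0"
      unfolding has_separating_weights_def by blast
    define Q where "Q = sum q K"
    have q_neg': "(\<Sum>b\<in>K. N a b * q b) < v * Q" if "a \<in> H" for a
      using q_neg that unfolding row_def Q_def
      by (simp add: left_diff_distrib sum_subtractf sum_distrib_left)
    have "0 < Q"
    proof (rule ccontr)
      assume "\<not> 0 < Q"
      then have "Q = 0"
        using q0 sum_nonneg[of K q] unfolding Q_def by force
      then have "\<forall>b\<in>K. q b = 0"
        using q0 assms(3) unfolding Q_def by (simp add: sum_nonneg_eq_0_iff)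
      with q_neg' assms(2) \<open>Q = 0\<close> show False by auto
    qed
    have "(\<Sum>b\<in>K. N a b * (q b / Q)) \<le> v" if "a \<in> H" for a
      using q_neg'[OF that] \<open>0 < Q\<close>
      by (simp add: sum_divide_distrib[symmetric] divide_le_eq)
    moreover have "sum (\<lambda>b. q b / Q) K = 1"
      using \<open>0 < Q\<close> unfolding Q_def by (simp add: sum_divide_distrib[symmetric])
    ultimately show ?thesis using q0 \<open>0 < Q\<close> by (intro disjI2 exI[of _ "\<lambda>b. q b / Q"]) auto
  qed
qed

section \<open>Values of debate games\<close>

lemma le_SUP_INF_if_guarantee:
  fixes E :: "'x \<Rightarrow> 'y \<Rightarrow> real"
  assumes bounded: "\<forall>x\<in>X. \<forall>y\<in>Y. l \<le> E x y \<and> E x y \<le> u"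
    and "\<sigma> \<in> X" "Y \<noteq> {}" "\<forall>y\<in>Y. c \<le> E \<sigma> y"
  shows "c \<le> (SUP x\<in>X. INF y\<in>Y. E x y)"
proof -
  have "c \<le> (INF y\<in>Y. E \<sigma> y)"
    using assms by (intro cINF_greatest) auto
  also have "\<dots> \<le> (SUP x\<in>X. INF y\<in>Y. E x y)"
  proof (rule cSUP_upper[OF \<open>\<sigma> \<in> X\<close>])
    obtain y0 where "y0 \<in> Y" using \<open>Y \<noteq> {}\<close> by blast
    have "(INF y\<in>Y. E x y) \<le> u" if "x \<in> X" for x
    proof -
      have "(INF y\<in>Y. E x y) \<le> E x y0"
        using bounded that \<open>y0 \<in> Y\<close> by (intro cINF_lower) (auto simp: bdd_below_def)
      then show ?thesis using bounded that \<open>y0 \<in> Y\<close> by force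
    qed
    then show "bdd_above ((\<lambda>x. INF y\<in>Y. E x y) ` X)"
      by (auto simp: bdd_above_def)
  qed
  finally show ?thesis .
qed

text \<open>This replaces the value of the matrix game: the alternative for every threshold v suffices.\<close>

lemma le_add_if_split_bounds:
  fixes \<alpha> x y :: real
  assumes "0 < \<alpha>" and split: "\<And>v. \<alpha> * v \<le> x \<or> \<alpha> * (1 - v) \<le> y"
  shows "\<alpha> \<le> x + y"
proof -
  define v where "v = (x + \<alpha> - y) / (2 * \<alpha>)"
  have "\<alpha> * v = (x + \<alpha> - y) / 2"
    using \<open>0 < \<alpha>\<close> by (simp add: v_def)
  moreover have "\<alpha> * v \<le> x \<or> \<alpha> - \<alpha> * v \<le> y"
    using split[of v] by (simp add: right_diff_distrib)
  ultimately show ?thesis by argo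
qed

lemma sum_acts: "finite A \<Longrightarrow> sum f (acts A) = f None + (\<Sum>x\<in>A. f (Some x))"
  by (simp add: acts_def sum.reindex)

lemma avail_acts: "a \<in> acts A \<Longrightarrow> avail A a"
  by (auto simp: acts_def avail_def)

definition restrict_avail ::
    "nat set \<Rightarrow> (nat option \<Rightarrow> real) \<Rightarrow> nat set \<Rightarrow> nat option \<Rightarrow> real" where
  "restrict_avail A p t a = (case a of
     None \<Rightarrow> p None + (\<Sum>x\<in>A - t. p (Some x))
   | Some x \<Rightarrow> if x \<in> A \<inter> t then p a else 0)"

lemma is_strategy_restrict_avail:
  assumes "finite A" "\<forall>a\<in>acts A. 0 \<le> p a" "sum p (acts A) = 1"
  shows "is_strategy A (restrict_avail A p)"
  unfolding is_strategy_def
proof (intro conjI allI impI)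
  fix t a
  show "0 \<le> restrict_avail A p t a"
    using assms(2)
    by (auto simp: restrict_avail_def acts_def intro!: add_nonneg_nonneg sum_nonneg split: option.split)
  show "a \<notin> acts A \<Longrightarrow> restrict_avail A p t a = 0"
    by (auto simp: restrict_avail_def acts_def split: option.split)
next
  fix t
  have "(\<Sum>x\<in>A. restrict_avail A p t (Some x)) = (\<Sum>x\<in>A \<inter> t. p (Some x))"
    using assms(1) by (simp add: restrict_avail_def sum.inter_restrict[symmetric])
  then show "sum (restrict_avail A p t) (acts A) = 1"
    using assms(1,3) sum.Int_Diff[OF assms(1), of "\<lambda>x. p (Some x)" t]
    by (simp add: sum_acts restrict_avail_def)
qed

lemma restrict_avail_ge:
  assumes "\<forall>a\<in>acts A. 0 \<le> p a" "a \<in> acts A" "avail t a"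
  shows "p a \<le> restrict_avail A p t a"
  using assms by (auto simp: restrict_avail_def acts_def avail_def intro!: sum_nonneg)

lemma payoff_bounds:
  assumes "is_policy A M" "a1 \<in> acts A" "a2 \<in> acts A" "i \<in> {1, 2}"
  shows "0 \<le> payoff M i t1 t2 a1 a2 \<and> payoff M i t1 t2 a1 a2 \<le> 1"
  using assms unfolding payoff_def is_policy_def by auto

lemma exp_payoff_bounds:
  assumes "is_policy A M" "\<forall>s\<in>S. 0 \<le> P s" "sum P S = 1"
    and "is_strategy A \<sigma>1" "is_strategy A \<sigma>2" "i \<in> {1, 2}"
  shows "0 \<le> exp_payoff A S P T1 T2 M i \<sigma>1 \<sigma>2 \<and> exp_payoff A S P T1 T2 M i \<sigma>1 \<sigma>2 \<le> 1"
proof -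
  let ?H = "acts A"
  define E where
    "E s = (\<Sum>a1\<in>?H. \<Sum>a2\<in>?H. \<sigma>1 (T1 s) a1 * \<sigma>2 (T2 s) a2 * payoff M i (T1 s) (T2 s) a1 a2)"
    for s
  have \<sigma>: "0 \<le> \<sigma>1 t a" "0 \<le> \<sigma>2 t a" "sum (\<sigma>1 t) ?H = 1" "sum (\<sigma>2 t) ?H = 1" for t a
    using assms(4,5) unfolding is_strategy_def by auto
  note payoff = payoff_bounds[OF assms(1) _ _ assms(6)]
  have "0 \<le> E s" for s
    unfolding E_def using \<sigma> payoff by (intro sum_nonneg mult_nonneg_nonneg) auto
  moreover have "E s \<le> 1" for s
  proof -
    have "E s \<le> (\<Sum>a1\<in>?H. \<Sum>a2\<in>?H. \<sigma>1 (T1 s) a1 * \<sigma>2 (T2 s) a2)"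
      unfolding E_def using \<sigma> payoff by (intro sum_mono) (auto intro!: mult_left_le)
    also have "\<dots> = 1" using \<sigma> by (simp add: sum_product[symmetric])
    finally show ?thesis .
  qed
  ultimately have "0 \<le> (\<Sum>s\<in>S. P s * E s) \<and> (\<Sum>s\<in>S. P s * E s) \<le> sum P S"
    using assms(2) by (auto intro!: sum_nonneg sum_mono mult_left_le)
  then show ?thesis
    using assms(3) unfolding exp_payoff_def E_def by simp
qed

definition swap_roles ::
    "(nat \<Rightarrow> nat option \<Rightarrow> nat option \<Rightarrow> real) \<Rightarrow> nat \<Rightarrow> nat option \<Rightarrow> nat option \<Rightarrow> real" where
  "swap_roles M i a b = M (3 - i) b a"

lemma is_policy_swap_roles: "is_policy A M \<Longrightarrow> is_policy A (swap_roles M)"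
  by (auto simp: is_policy_def swap_roles_def add.commute)

lemma payoff_swap_roles: "payoff M 2 t1 t2 a1 a2 = payoff (swap_roles M) 1 t2 t1 a2 a1"
  by (simp add: payoff_def swap_roles_def)

lemma val2_swap_roles: "val2 A S P T1 T2 M = val1 A S P T2 T1 (swap_roles M)"
proof -
  have "exp_payoff A S P T1 T2 M 2 \<sigma>1 \<sigma>2 = exp_payoff A S P T2 T1 (swap_roles M) 1 \<sigma>2 \<sigma>1" for \<sigma>1 \<sigma>2
    unfolding exp_payoff_def payoff_swap_roles
    by (subst sum.swap) (simp add: ac_simps)
  then show ?thesis unfolding val1_def val2_def by simp
qed

lemma payoff_against_omniscient:
  "b \<in> acts A \<Longrightarrow> payoff M i t A a b = (if avail t a then M i a b else if i = 1 then 0 else 1)"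
  by (simp add: payoff_def avail_acts)

lemma exp_payoff_restrict_avail_ge:
  assumes "is_policy A M" "finite S" "\<forall>s\<in>S. 0 \<le> P s" "0 \<le> \<alpha>"
    and cover: "\<forall>a\<in>acts A. \<alpha> \<le> sum P {s\<in>S. avail (T s) a}"
    and p: "\<forall>a\<in>acts A. 0 \<le> p a"
    and guarantee: "\<forall>b\<in>acts A. v \<le> (\<Sum>a\<in>acts A. p a * M 1 a b)"
    and "is_strategy A \<tau>"
  shows "\<alpha> * v \<le> exp_payoff A S P T (\<lambda>_. A) M 1 (restrict_avail A p) \<tau>"
proof -
  let ?H = "acts A" and ?r = "restrict_avail A p"
  have \<tau>: "\<forall>b\<in>?H. 0 \<le> \<tau> A b" "sum (\<tau> A) ?H = 1"
    using \<open>is_strategy A \<tau>\<close> unfolding is_strategy_def by auto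
  define K where "K a = (\<Sum>b\<in>?H. \<tau> A b * M 1 a b)" for a
  have K0: "0 \<le> K a" if "a \<in> ?H" for a
    using assms(1) \<tau> that unfolding K_def is_policy_def by (auto intro!: sum_nonneg)
  have "v = (\<Sum>b\<in>?H. \<tau> A b * v)"
    using \<tau> by (simp add: sum_distrib_right[symmetric])
  also have "\<dots> \<le> (\<Sum>b\<in>?H. \<tau> A b * (\<Sum>a\<in>?H. p a * M 1 a b))"
    using \<tau> guarantee by (intro sum_mono mult_left_mono) auto
  also have "\<dots> = (\<Sum>a\<in>?H. p a * K a)"
    unfolding K_def sum_distrib_left by (subst sum.swap) (simp add: ac_simps)
  finally have "\<alpha> * v \<le> (\<Sum>a\<in>?H. \<alpha> * (p a * K a))"
    using \<open>0 \<le> \<alpha>\<close> by (simp add: mult_left_mono sum_distrib_left[symmetric])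
  also have "\<dots> \<le> (\<Sum>a\<in>?H. sum P {s\<in>S. avail (T s) a} * (p a * K a))"
    using cover p K0 by (intro sum_mono mult_right_mono) auto
  also have "\<dots> = (\<Sum>s\<in>S. P s * (\<Sum>a\<in>?H. if avail (T s) a then p a * K a else 0))"
    using assms(2)
    by (simp add: sum.inter_filter sum_distrib_left sum_distrib_right sum.swap[of _ S]
        if_distrib[of "\<lambda>u. u * _"] if_distrib[of "\<lambda>u. _ * u"] cong: if_cong)
  also have "\<dots> \<le> (\<Sum>s\<in>S. P s * (\<Sum>a\<in>?H. if avail (T s) a then ?r (T s) a * K a else 0))"
    using assms(3) restrict_avail_ge[OF p] K0
    by (intro sum_mono mult_left_mono) (auto intro: mult_right_mono)
  also have "\<dots> = exp_payoff A S P T (\<lambda>_. A) M 1 ?r \<tau>"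
  proof -
    have "(\<Sum>b\<in>?H. ?r t a * \<tau> A b * payoff M 1 t A a b) = (if avail t a then ?r t a * K a else 0)"
      for t a
      unfolding K_def sum_distrib_left
      by (auto simp: payoff_against_omniscient ac_simps intro!: sum.cong)
    then show ?thesis
      unfolding exp_payoff_def by simp
  qed
  finally show ?thesis .
qed

lemma val1_ge_against_omniscient:
  assumes "is_policy A M" "finite A" "finite S" "\<forall>s\<in>S. 0 \<le> P s" "sum P S = 1" "0 \<le> \<alpha>"
    and cover: "\<forall>a\<in>acts A. \<alpha> \<le> sum P {s\<in>S. avail (T s) a}"
    and p: "\<forall>a\<in>acts A. 0 \<le> p a" "sum p (acts A) = 1"
    and guarantee: "\<forall>b\<in>acts A. v \<le> (\<Sum>a\<in>acts A. p a * M 1 a b)"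
  shows "\<alpha> * v \<le> val1 A S P T (\<lambda>_. A) M"
  unfolding val1_def
proof (rule le_SUP_INF_if_guarantee[where l=0 and u=1])
  show "restrict_avail A p \<in> {\<sigma>. is_strategy A \<sigma>}"
    using is_strategy_restrict_avail[OF assms(2) p] by simp
  then show "{\<sigma>. is_strategy A \<sigma>} \<noteq> {}"
    by blast
  show "\<forall>\<tau>\<in>{\<sigma>. is_strategy A \<sigma>}. \<alpha> * v \<le> exp_payoff A S P T (\<lambda>_. A) M 1 (restrict_avail A p) \<tau>"
    using exp_payoff_restrict_avail_ge[OF assms(1,3,4,6) cover p(1) guarantee] by simp
qed (use exp_payoff_bounds[OF assms(1,4,5)] in auto)

lemma piddg_error_ge_against_omniscient:
  assumes "is_policy A M" "finite A" "finite S" "\<forall>s\<in>S. 0 \<le> P s" "sum P S = 1" "0 < \<alpha>"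
    and cover: "\<forall>a\<in>acts A. \<alpha> \<le> sum P {s\<in>S. avail (Cl s) a}"
  shows "\<alpha> / 2 \<le> piddg_error A S P (\<lambda>_. A) Cl M"
proof -
  let ?H = "acts A"
  have H: "finite ?H" "?H \<noteq> {}"
    using assms(2) by (auto simp: acts_def)
  have "\<alpha> * v \<le> val1 A S P Cl (\<lambda>_. A) M \<or> \<alpha> * (1 - v) \<le> val2 A S P (\<lambda>_. A) Cl M" for v
    using matrix_game_alternative[OF H H(1), of v "M 1"]
  proof (elim disjE exE conjE)
    fix p assume "\<forall>a\<in>?H. 0 \<le> p a" "sum p ?H = 1" "\<forall>b\<in>?H. v \<le> (\<Sum>a\<in>?H. p a * M 1 a b)"
    then show ?thesis
      using val1_ge_against_omniscient[OF assms(1-5) _ cover] \<open>0 < \<alpha>\<close> by auto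
  next
    fix q assume q: "\<forall>b\<in>?H. 0 \<le> q b" "sum q ?H = 1"
      and q_bound: "\<forall>a\<in>?H. (\<Sum>b\<in>?H. M 1 a b * q b) \<le> v"
    have "1 - v \<le> (\<Sum>a\<in>?H. q a * swap_roles M 1 a b)" if "b \<in> ?H" for b
    proof -
      have swap: "swap_roles M 1 a b = 1 - M 1 b a" if "a \<in> ?H" for a
        using assms(1) that \<open>b \<in> ?H\<close> unfolding is_policy_def swap_roles_def by fastforce
      have "(\<Sum>a\<in>?H. q a * swap_roles M 1 a b) = (\<Sum>a\<in>?H. q a - M 1 b a * q a)"
        using swap by (intro sum.cong refl) (simp add: right_diff_distrib mult.commute)
      also have "\<dots> = 1 - (\<Sum>a\<in>?H. M 1 b a * q a)"
        using q by (simp add: sum_subtractf)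
      finally show ?thesis using q_bound that by simp
    qed
    then have "\<alpha> * (1 - v) \<le> val1 A S P Cl (\<lambda>_. A) (swap_roles M)"
      using val1_ge_against_omniscient[OF is_policy_swap_roles assms(2-5) _ cover q] assms(1,6)
      by simp
    then show ?thesis
      unfolding val2_swap_roles by simp
  qed
  then have "\<alpha> \<le> val1 A S P Cl (\<lambda>_. A) M + val2 A S P (\<lambda>_. A) Cl M"
    by (rule le_add_if_split_bounds[OF \<open>0 < \<alpha>\<close>])
  then show ?thesis
    unfolding piddg_error_def by simp
qed

lemma card_cyclic_windows_containing:
  assumes "x < m" "n \<le> m"
  shows "n \<le> card {s\<in>{0..<m}. x \<in> (\<lambda>k. (s + k) mod m) ` {0..<n}}"
proof -
  define start where "start k = (if k \<le> x then x - k else x + m - k)" for k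
  have "start ` {0..<n} \<subseteq> {s\<in>{0..<m}. x \<in> (\<lambda>k. (s + k) mod m) ` {0..<n}}"
  proof safe
    fix k assume "k \<in> {0..<n}"
    moreover have "(start k + k) mod m = x"
      using assms \<open>k \<in> {0..<n}\<close> unfolding start_def by auto
    ultimately show "x \<in> (\<lambda>k'. (start k + k') mod m) ` {0..<n}"
      by force
    show "start k \<in> {0..<m}"
      using assms \<open>k \<in> {0..<n}\<close> unfolding start_def by auto
  qed
  moreover have "inj_on start {0..<n}"
    using assms unfolding inj_on_def start_def by auto
  ultimately show ?thesis
    using card_mono[OF _ \<open>start ` {0..<n} \<subseteq> _\<close>] card_image by fastforce
qed

lemma avail_prob_cyclic_window:
  assumes "n \<le> m" "a \<in> acts {0..<m}"
  shows "real n / real m \<le> (\<Sum>s\<in>{s\<in>{0..<m}. avail ((\<lambda>k. (s + k) mod m) ` {0..<n}) a}. 1 / real m)"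
proof -
  consider "a = None" | x where "a = Some x" "x < m"
    using assms(2) unfolding acts_def by auto
  then show ?thesis
  proof cases
    case 1
    then show ?thesis using assms(1) by (simp add: avail_def divide_right_mono)
  next
    case 2
    then show ?thesis
      using card_cyclic_windows_containing[OF 2(2) assms(1)] by (simp add: avail_def divide_right_mono)
  qed
qed

theorem theorem5p5:
  fixes m n :: nat
  assumes "0 < n" and "n \<le> m"
  shows "\<exists>(A::nat set) (S::nat set) (P::nat \<Rightarrow> real) (Cw::nat \<Rightarrow> nat set) (Cl::nat \<Rightarrow> nat set).
           is_PIDDG A S P Cw Cl \<and> (\<forall>s\<in>S. m \<le> card (Cw s) \<and> card (Cl s) \<le> n) \<and>
           (\<forall>M. is_policy A M \<longrightarrow> real n / (2 * real m) \<le> piddg_error A S P Cw Cl M)"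
proof -
  define A :: "nat set" where "A = {0..<m}"
  define P :: "nat \<Rightarrow> real" where "P s = 1 / real m" for s
  define Cl where "Cl s = (\<lambda>k. (s + k) mod m) ` {0..<n}" for s
  have P_sum: "sum P A = 1"
    using assms by (simp add: P_def A_def)
  have "is_PIDDG A A P (\<lambda>_. A) Cl"
    unfolding is_PIDDG_def using P_sum by (auto simp: A_def Cl_def P_def)
  moreover have "\<forall>s\<in>A. m \<le> card A \<and> card (Cl s) \<le> n"
    by (auto simp: A_def Cl_def intro: order.trans[OF card_image_le])
  moreover have "real n / (2 * real m) \<le> piddg_error A A P (\<lambda>_. A) Cl M" if "is_policy A M" for M
  proof -
    have "\<forall>a\<in>acts A. real n / real m \<le> sum P {s\<in>A. avail (Cl s) a}"
      using avail_prob_cyclic_window[OF assms(2)] unfolding A_def Cl_def P_def by blast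
    from piddg_error_ge_against_omniscient[OF that _ _ _ P_sum _ this] show ?thesis
      using assms by (simp add: A_def P_def)
  qed
  ultimately show ?thesis by blast
qed

end
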